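(* Let $\Omega\subseteq\mathbb{R}^2$ be open and let $f=(\phi_1,\phi_2):\Omega\to\mathbb{R}^2$ be a smooth plane transformation. For a nondegenerate triangle with vertices $a,b,c\in\mathbb{R}^2$, let $a'$ denote the mirror vertex of $a$, i.e. the reflection of $a$ across the line through $b$ and $c$. Then for every $x\in\Omega$, $$\lim \frac{\det\big(f(a')-f(a),\; f(c)-f(b)\big)}{2\det\big(b-a,\; c-b\big)} \;=\; \det Df(x)=\partial_1\phi_1(x)\,\partial_2\phi_2(x)-\partial_2\phi_1(x)\,\partial_1\phi_2(x),$$ where the limit is taken as $(a,b,c)\to(x,x,x)$ in $\mathbb{R}^2\times\mathbb{R}^2\times\mathbb{R}^2$, over triples $(a,b,c)$ such that the triangle $a,b,c$ is nondegenerate (i.e. $\det(b-a,c-b)\neq 0$) and the mirror vertex $a'$ is balanced (and $a,b,c,a'\in\Omega$, which holds automatically for such triples close enough to $x$).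
   Context: $\det(u,v)$ denotes the determinant of the $2\times 2$ matrix with rows $u,v\in\mathbb{R}^2$; equivalently $\det(b-a,c-b)=(a\wedge b+b\wedge c+c\wedge a)\cdot\mathbb{I}_2$ in the Clifford algebra of $\mathbb{R}^2$. A real function $\psi:\Omega\to\mathbb{R}$ on an open set $\Omega\subseteq\mathbb{R}^2$ is called smooth if it is $C^2$ on $\Omega$ and $\sup_{x\in\Omega}\max\{|\lambda_1(x)|,|\lambda_2(x)|\}<\infty$, where $\lambda_1(x),\lambda_2(x)$ are the eigenvalues of the Hessian matrix of $\psi$ at $x$. A transformation $f:\Omega\to\mathbb{R}^2$ is smooth if both components $\phi_1,\phi_2$ are smooth functions. For a nondegenerate triangle with vertices $a,b,c$, the mirror vertex of $a$ is $a'=-\big[a+2b\frac{(a-c)\cdot(c-b)}{|c-b|^2}+2c\frac{(b-a)\cdot(c-b)}{|c-b|^2}\big]$, the reflection of $a$ across the line through $b,c$. The mirror vertex $a'$ is called balanced if the point $\bar a=\frac12(a+a')$ (the foot of the perpendicular from $a$ to the line $bc$) lies in the closed segment $[b,c]$. *)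

theory Defs
  imports "HOL-Analysis.Analysis"
begin

definition det2 :: "real^2 \<Rightarrow> real^2 \<Rightarrow> real" where
  "det2 u v = u$1 * v$2 - u$2 * v$1"

definition smooth_fun :: "(real^2) set \<Rightarrow> (real^2 \<Rightarrow> real) \<Rightarrow> bool" where
  "smooth_fun \<Omega> \<psi> \<longleftrightarrow>
     (\<exists>D :: real^2 \<Rightarrow> real^2. \<exists>H :: real^2 \<Rightarrow> real^2^2.
        (\<forall>x\<in>\<Omega>. (\<psi> has_derivative (\<lambda>h. D x \<bullet> h)) (at x)) \<and>
        (\<forall>x\<in>\<Omega>. (D has_derivative (\<lambda>h. H x *v h)) (at x)) \<and>
        continuous_on \<Omega> H \<and>
        (\<exists>B::real. \<forall>x\<in>\<Omega>. \<forall>l::real. \<forall>v::real^2.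
            v \<noteq> 0 \<and> H x *v v = l *\<^sub>R v \<longrightarrow> \<bar>l\<bar> \<le> B))"

definition smooth_transf :: "(real^2) set \<Rightarrow> (real^2 \<Rightarrow> real^2) \<Rightarrow> bool" where
  "smooth_transf \<Omega> f \<longleftrightarrow> smooth_fun \<Omega> (\<lambda>y. f y $ 1) \<and> smooth_fun \<Omega> (\<lambda>y. f y $ 2)"

definition mirror_vertex :: "real^2 \<Rightarrow> real^2 \<Rightarrow> real^2 \<Rightarrow> real^2" where
  "mirror_vertex a b c =
     - (a + ((2 * ((a - c) \<bullet> (c - b)) / (norm (c - b))^2) *\<^sub>R b)
          + ((2 * ((b - a) \<bullet> (c - b)) / (norm (c - b))^2) *\<^sub>R c))"

definition balanced :: "real^2 \<Rightarrow> real^2 \<Rightarrow> real^2 \<Rightarrow> bool" where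
  "balanced a b c \<longleftrightarrow> (1/2) *\<^sub>R (a + mirror_vertex a b c) \<in> closed_segment b c"

end

theory Submission
  imports Defs
begin

text \<open>The vector \<open>a' - a\<close> is twice the component of \<open>b - a\<close> orthogonal to \<open>c - b\<close>.
  Hence it is orthogonal to \<open>c - b\<close>, has length at most \<open>2 |b - a|\<close>, and
  \<open>det(a' - a, c - b) = 2 det(b - a, c - b)\<close>. A \<open>C\<^sup>1\<close> map is strictly differentiable:
  \<open>f p - f q = Df(x)(p - q) + o(|p - q|)\<close> uniformly for \<open>p, q\<close> near \<open>x\<close>. So the numerator
  equals \<open>det Df(x) \<cdot> det(a' - a, c - b)\<close> up to an error \<open>o(|a' - a| |c - b|)\<close>, and by
  orthogonality \<open>|a' - a| |c - b| = |det(a' - a, c - b)|\<close> is exactly the denominator.\<close>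

lemma inner_vec2: "(u::real^2) \<bullet> v = u$1 * v$1 + u$2 * v$2"
  by (simp add: inner_vec_def sum_2)

lemma det2_squared_plus_inner_squared: "(det2 u v)^2 + (u \<bullet> v)^2 = (norm u * norm v)^2"
  unfolding power_mult_distrib power2_norm_eq_inner det2_def inner_vec2
  by (simp add: algebra_simps power2_eq_square)

lemma abs_det2_le: "\<bar>det2 u v\<bar> \<le> norm u * norm v"
  using det2_squared_plus_inner_squared[of u v]
  by (metis abs_le_square_iff abs_norm_cancel abs_mult le_add_same_cancel1 zero_le_power2)

lemma abs_det2_orthogonal:
  assumes "u \<bullet> v = 0"
  shows "\<bar>det2 u v\<bar> = norm u * norm v"
proof -
  have "\<bar>det2 u v\<bar>^2 = (norm u * norm v)^2"
    using det2_squared_plus_inner_squared[of u v] assms by simp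
  then show ?thesis
    using power2_eq_iff_nonneg[of "\<bar>det2 u v\<bar>" "norm u * norm v"] by simp
qed

lemma det2_matrix_vector_mult: "det2 (A *v u) (A *v v) = det A * det2 u v" for A :: "real^2^2"
  by (simp add: det2_def det_2 matrix_vector_mult_def sum_2 algebra_simps)

lemma abs_det2_add_minus_le:
  "\<bar>det2 (U + e) (V + g) - det2 U V\<bar> \<le> norm U * norm g + norm e * norm V + norm e * norm g"
proof -
  have "det2 (U + e) (V + g) - det2 U V = det2 U g + det2 e V + det2 e g"
    by (simp add: det2_def algebra_simps)
  then show ?thesis
    using abs_det2_le[of U g] abs_det2_le[of e V] abs_det2_le[of e g] by linarith
qed

lemma mirror_vertex_minus_self:
  assumes "c \<noteq> b"
  shows "mirror_vertex a b c - a
           = 2 *\<^sub>R (b - a) - (2 * ((b - a) \<bullet> (c - b)) / ((c - b) \<bullet> (c - b))) *\<^sub>R (c - b)"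
proof -
  define v where "v = c - b"
  define s where "s = 2 * ((a - c) \<bullet> v) / (v \<bullet> v)"
  define t where "t = 2 * ((b - a) \<bullet> v) / (v \<bullet> v)"
  have "v \<bullet> v \<noteq> 0" using assms by (simp add: v_def)
  have c: "c = b + v" by (simp add: v_def)
  have "s + t = (2 * ((a - c) \<bullet> v) + 2 * ((b - a) \<bullet> v)) / (v \<bullet> v)"
    by (simp add: s_def t_def add_divide_distrib)
  also have "2 * ((a - c) \<bullet> v) + 2 * ((b - a) \<bullet> v) = - 2 * (v \<bullet> v)"
    by (simp add: c inner_diff_left inner_add_left algebra_simps)
  finally have "s + t = -2" using \<open>v \<bullet> v \<noteq> 0\<close> by simp
  have "mirror_vertex a b c - a = - 2 *\<^sub>R a - s *\<^sub>R b - t *\<^sub>R (b + v)"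
    unfolding mirror_vertex_def power2_norm_eq_inner s_def t_def v_def by (simp add: algebra_simps scaleR_2)
  also have "\<dots> = - 2 *\<^sub>R a - (s + t) *\<^sub>R b - t *\<^sub>R v"
    by (simp add: algebra_simps)
  also have "\<dots> = 2 *\<^sub>R (b - a) - t *\<^sub>R v"
    using \<open>s + t = -2\<close> by (simp add: algebra_simps)
  finally show ?thesis by (simp add: t_def v_def)
qed

lemma mirror_vertex_minus_self_orthogonal:
  assumes "c \<noteq> b"
  shows "(mirror_vertex a b c - a) \<bullet> (c - b) = 0"
proof -
  have "(2 *\<^sub>R w - (2 * (w \<bullet> v) / (v \<bullet> v)) *\<^sub>R v) \<bullet> v = 0" if "v \<noteq> 0" for w v :: "real^2"
    using that by (simp add: inner_diff_left)
  then show ?thesis using assms by (simp add: mirror_vertex_minus_self)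
qed

lemma det2_mirror_vertex_minus_self:
  assumes "c \<noteq> b"
  shows "det2 (mirror_vertex a b c - a) (c - b) = 2 * det2 (b - a) (c - b)"
proof -
  have "det2 (2 *\<^sub>R w - k *\<^sub>R v) v = 2 * det2 w v" for w v :: "real^2" and k
    by (simp add: det2_def algebra_simps)
  then show ?thesis using assms by (simp add: mirror_vertex_minus_self)
qed

lemma norm_mirror_vertex_minus_self_le:
  assumes "c \<noteq> b"
  shows "norm (mirror_vertex a b c - a) \<le> 2 * norm (b - a)"
proof -
  have "norm (mirror_vertex a b c - a) * norm (c - b) = 2 * \<bar>det2 (b - a) (c - b)\<bar>"
    using assms by (simp add: abs_det2_orthogonal[symmetric] mirror_vertex_minus_self_orthogonal
        det2_mirror_vertex_minus_self)
  also have "\<dots> \<le> 2 * norm (b - a) * norm (c - b)"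
    using abs_det2_le by simp
  finally show ?thesis using assms by simp
qed

lemma dist_mirror_vertex_le:
  assumes "c \<noteq> b"
  shows "dist (mirror_vertex a b c) x \<le> 3 * dist a x + 2 * dist b x"
proof -
  have "dist (mirror_vertex a b c) x \<le> norm (mirror_vertex a b c - a) + dist a x"
    by (metis dist_norm dist_triangle)
  moreover have "norm (b - a) \<le> dist a x + dist b x"
    by (metis dist_norm dist_commute dist_triangle2)
  ultimately show ?thesis using norm_mirror_vertex_minus_self_le[OF assms, of a] by linarith
qed

definition has_strict_derivative_at ::
    "('a::real_normed_vector \<Rightarrow> 'b::real_normed_vector) \<Rightarrow> ('a \<Rightarrow> 'b) \<Rightarrow> 'a \<Rightarrow> bool" where
  "has_strict_derivative_at f f' x \<longleftrightarrow>
     (\<forall>\<epsilon>>0. \<exists>\<delta>>0. \<forall>p q. dist p x < \<delta> \<longrightarrow> dist q x < \<delta> \<longrightarrow>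
        norm (f p - f q - f' (p - q)) \<le> \<epsilon> * norm (p - q))"

lemma has_strict_derivative_at_if_isCont_gradient:
  fixes \<psi> :: "'a::real_inner \<Rightarrow> real" and D :: "'a \<Rightarrow> 'a"
  assumes "open \<Omega>" "x \<in> \<Omega>"
    and deriv: "\<And>y. y \<in> \<Omega> \<Longrightarrow> (\<psi> has_derivative (\<lambda>h. D y \<bullet> h)) (at y)"
    and "isCont D x"
  shows "has_strict_derivative_at \<psi> (\<lambda>h. D x \<bullet> h) x"
  unfolding has_strict_derivative_at_def
proof (intro allI impI)
  fix \<epsilon> :: real assume "\<epsilon> > 0"
  obtain r where "r > 0" "ball x r \<subseteq> \<Omega>" using assms(1,2) open_contains_ball by blast
  obtain s where "s > 0" and s: "\<And>y. dist y x < s \<Longrightarrow> dist (D y) (D x) < \<epsilon>"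
    using \<open>isCont D x\<close> \<open>\<epsilon> > 0\<close> unfolding continuous_at_eps_delta by blast
  define \<delta> where "\<delta> = min r s"
  have "\<delta> > 0" using \<open>r > 0\<close> \<open>s > 0\<close> by (simp add: \<delta>_def)
  moreover have "norm (\<psi> p - \<psi> q - D x \<bullet> (p - q)) \<le> \<epsilon> * norm (p - q)"
    if "dist p x < \<delta>" "dist q x < \<delta>" for p q
  proof -
    have "norm (\<psi> p - \<psi> q - D x \<bullet> (p - q)) \<le> norm (p - q) * \<epsilon>"
    proof (rule differentiable_bound_linearization[of q p "ball x \<delta>" \<psi> "\<lambda>y h. D y \<bullet> h" x \<epsilon>])
      fix t :: real assume "t \<in> {0..1}"
      then show "q + t *\<^sub>R (p - q) \<in> ball x \<delta>"
        using convex_ball[of x \<delta>] that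
        unfolding convex_alt by (auto simp: dist_commute algebra_simps)
    next
      fix y assume "y \<in> ball x \<delta>"
      then show "(\<psi> has_derivative (\<lambda>h. D y \<bullet> h)) (at y within ball x \<delta>)"
        using \<open>ball x r \<subseteq> \<Omega>\<close> deriv has_derivative_at_withinI by (force simp: \<delta>_def)
      have "norm (D y - D x) \<le> \<epsilon>"
        using s \<open>y \<in> ball x \<delta>\<close> by (force simp: \<delta>_def dist_norm norm_minus_commute)
      have "onorm (\<lambda>h. (D y - D x) \<bullet> h) \<le> norm (D y - D x) * onorm (\<lambda>h::'a. h)"
        using onorm_inner_right[OF bounded_linear_ident, of "D y - D x"] by simp
      also have "\<dots> \<le> \<epsilon>"
        using \<open>norm (D y - D x) \<le> \<epsilon>\<close> onorm_id_le
        by (metis mult_left_mono norm_ge_zero mult.right_neutral order_trans)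
      finally show "onorm ((\<lambda>h. D y \<bullet> h) - (\<lambda>h. D x \<bullet> h)) \<le> \<epsilon>"
        by (simp add: fun_diff_def inner_diff_left)
    qed (use \<open>\<delta> > 0\<close> in auto)
    then show ?thesis by (simp add: mult.commute)
  qed
  ultimately show "\<exists>\<delta>>0. \<forall>p q. dist p x < \<delta> \<longrightarrow> dist q x < \<delta> \<longrightarrow>
      norm (\<psi> p - \<psi> q - D x \<bullet> (p - q)) \<le> \<epsilon> * norm (p - q)"
    by blast
qed

lemma has_strict_derivative_at_componentwise:
  fixes f :: "'a::real_normed_vector \<Rightarrow> real^'m" and f' :: "'a \<Rightarrow> real^'m"
  assumes "\<And>i. has_strict_derivative_at (\<lambda>y. f y $ i) (\<lambda>h. f' h $ i) x"
  shows "has_strict_derivative_at f f' x"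
  unfolding has_strict_derivative_at_def
proof (intro allI impI)
  fix \<epsilon> :: real assume "\<epsilon> > 0"
  define \<epsilon>' where "\<epsilon>' = \<epsilon> / CARD('m)"
  have "\<epsilon>' > 0" using \<open>\<epsilon> > 0\<close> by (simp add: \<epsilon>'_def)
  then have "\<forall>i. \<exists>\<delta>>0. \<forall>p q. dist p x < \<delta> \<longrightarrow> dist q x < \<delta> \<longrightarrow>
      \<bar>f p $ i - f q $ i - f' (p - q) $ i\<bar> \<le> \<epsilon>' * norm (p - q)"
    using assms unfolding has_strict_derivative_at_def by auto
  from choice[OF this] obtain \<delta> where \<delta>: "\<forall>i. \<delta> i > 0 \<and> (\<forall>p q. dist p x < \<delta> i \<longrightarrow> dist q x < \<delta> i \<longrightarrow>
      \<bar>f p $ i - f q $ i - f' (p - q) $ i\<bar> \<le> \<epsilon>' * norm (p - q))"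
    by blast
  define \<delta>\<^sub>0 where "\<delta>\<^sub>0 = Min (range \<delta>)"
  have "\<delta>\<^sub>0 > 0" using \<delta> by (simp add: \<delta>\<^sub>0_def)
  moreover have "norm (f p - f q - f' (p - q)) \<le> \<epsilon> * norm (p - q)"
    if "dist p x < \<delta>\<^sub>0" "dist q x < \<delta>\<^sub>0" for p q
  proof -
    have "\<bar>(f p - f q - f' (p - q)) $ i\<bar> \<le> \<epsilon>' * norm (p - q)" for i
    proof -
      have "\<delta>\<^sub>0 \<le> \<delta> i" by (simp add: \<delta>\<^sub>0_def)
      then show ?thesis using \<delta> that by simp
    qed
    then have "(\<Sum>i\<in>UNIV. \<bar>(f p - f q - f' (p - q)) $ i\<bar>) \<le> (\<Sum>i::'m\<in>UNIV. \<epsilon>' * norm (p - q))"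
      by (meson sum_mono)
    then have "norm (f p - f q - f' (p - q)) \<le> (\<Sum>i::'m\<in>UNIV. \<epsilon>' * norm (p - q))"
      by (rule order_trans[OF norm_le_l1_cart])
    also have "\<dots> = \<epsilon> * norm (p - q)" by (simp add: \<epsilon>'_def)
    finally show ?thesis .
  qed
  ultimately show "\<exists>\<delta>>0. \<forall>p q. dist p x < \<delta> \<longrightarrow> dist q x < \<delta> \<longrightarrow>
      norm (f p - f q - f' (p - q)) \<le> \<epsilon> * norm (p - q)"
    by blast
qed

lemma has_derivative_matrix_rows:
  fixes f :: "real^'n \<Rightarrow> real^'m" and J :: "real^'n^'m"
  assumes "\<And>i. ((\<lambda>y. f y $ i) has_derivative (\<lambda>h. J $ i \<bullet> h)) (at x)"
  shows "(f has_derivative (\<lambda>h. J *v h)) (at x)"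
proof -
  have "((\<lambda>y. f y \<bullet> b) has_derivative (\<lambda>h. (J *v h) \<bullet> b)) (at x)" if b: "b \<in> Basis" for b
  proof -
    obtain i where "b = axis i 1" using b by (auto simp: Basis_vec_def)
    then show ?thesis using assms[of i] by (simp add: inner_axis matrix_mult_dot)
  qed
  then show ?thesis by (subst has_derivative_componentwise_within) blast
qed

definition mirror_quotient :: "(real^2 \<Rightarrow> real^2) \<Rightarrow> real^2 \<Rightarrow> real^2 \<Rightarrow> real^2 \<Rightarrow> real" where
  "mirror_quotient f a b c =
     det2 (f (mirror_vertex a b c) - f a) (f c - f b) / (2 * det2 (b - a) (c - b))"

lemma abs_mirror_quotient_minus_det_le:
  fixes f :: "real^2 \<Rightarrow> real^2" and J :: "real^2^2" and a b c :: "real^2"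
  defines "a' \<equiv> mirror_vertex a b c"
  assumes nondeg: "det2 (b - a) (c - b) \<noteq> 0" and "0 \<le> \<epsilon>"
    and "norm (f a' - f a - J *v (a' - a)) \<le> \<epsilon> * norm (a' - a)"
    and "norm (f c - f b - J *v (c - b)) \<le> \<epsilon> * norm (c - b)"
  shows "\<bar>mirror_quotient f a b c - det J\<bar> \<le> (2 * onorm ((*v) J) + \<epsilon>) * \<epsilon>"
proof -
  define u v K where "u = a' - a" and "v = c - b" and "K = onorm ((*v) J)"
  define e g where "e = f a' - f a - J *v u" and "g = f c - f b - J *v v"
  define \<Delta> where "\<Delta> = det2 (b - a) (c - b)"
  have "c \<noteq> b" using nondeg by (auto simp: det2_def)
  have det_uv: "det2 u v = 2 * \<Delta>"
    using det2_mirror_vertex_minus_self[OF \<open>c \<noteq> b\<close>] by (simp add: u_def v_def a'_def \<Delta>_def)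
  have "norm u * norm v = \<bar>det2 u v\<bar>"
    using abs_det2_orthogonal mirror_vertex_minus_self_orthogonal[OF \<open>c \<noteq> b\<close>]
    by (simp add: u_def v_def a'_def)
  with det_uv have norm_uv: "norm u * norm v = 2 * \<bar>\<Delta>\<bar>" by simp
  have "K \<ge> 0" unfolding K_def by (rule onorm_pos_le[OF matrix_vector_mul_bounded_linear])
  have "norm (J *v w) \<le> K * norm w" for w
    unfolding K_def by (rule onorm[OF matrix_vector_mul_bounded_linear])
  moreover have "norm e \<le> \<epsilon> * norm u" "norm g \<le> \<epsilon> * norm v"
    using assms(4,5) by (simp_all add: e_def g_def u_def v_def)
  ultimately have "norm (J *v u) * norm g + norm e * norm (J *v v) + norm e * norm g
      \<le> (K * norm u) * (\<epsilon> * norm v) + (\<epsilon> * norm u) * (K * norm v) + (\<epsilon> * norm u) * (\<epsilon> * norm v)"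
    using \<open>K \<ge> 0\<close> \<open>0 \<le> \<epsilon>\<close> by (intro add_mono mult_mono) auto
  also have "\<dots> = (2 * K + \<epsilon>) * \<epsilon> * (2 * \<bar>\<Delta>\<bar>)"
    unfolding norm_uv[symmetric] by (simp add: algebra_simps)
  finally have "\<bar>det2 (J *v u + e) (J *v v + g) - det2 (J *v u) (J *v v)\<bar> \<le> (2 * K + \<epsilon>) * \<epsilon> * (2 * \<bar>\<Delta>\<bar>)"
    using abs_det2_add_minus_le order_trans by blast
  moreover have "det2 (J *v u + e) (J *v v + g) - det2 (J *v u) (J *v v)
      = det2 (f a' - f a) (f c - f b) - det J * (2 * \<Delta>)"
    by (simp add: e_def g_def det2_matrix_vector_mult det_uv)
  moreover have "\<dots> = (mirror_quotient f a b c - det J) * (2 * \<Delta>)"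
    using nondeg by (simp add: mirror_quotient_def a'_def[symmetric] \<Delta>_def[symmetric] field_simps)
  ultimately show ?thesis
    using nondeg by (simp add: abs_mult K_def \<Delta>_def)
qed

lemma mirror_quotient_tendsto_det:
  fixes f :: "real^2 \<Rightarrow> real^2" and J :: "real^2^2"
  assumes "has_strict_derivative_at f (\<lambda>h. J *v h) x"
  shows "((\<lambda>(a, b, c). mirror_quotient f a b c) \<longlongrightarrow> det J)
           (at (x, x, x) within {(a, b, c). det2 (b - a) (c - b) \<noteq> 0})"
  unfolding Lim_within
proof (intro allI impI)
  fix e :: real assume "e > 0"
  define K where "K = onorm ((*v) J)"
  have "K \<ge> 0" unfolding K_def by (rule onorm_pos_le[OF matrix_vector_mul_bounded_linear])
  define \<epsilon> where "\<epsilon> = min 1 (e / (2 * K + 2))"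
  have "\<epsilon> > 0" using \<open>e > 0\<close> \<open>K \<ge> 0\<close> by (simp add: \<epsilon>_def)
  have "(2 * K + \<epsilon>) * \<epsilon> \<le> (2 * K + 1) * (e / (2 * K + 2))"
    using \<open>\<epsilon> > 0\<close> \<open>K \<ge> 0\<close> by (intro mult_mono) (auto simp: \<epsilon>_def)
  also have "\<dots> < e" using \<open>e > 0\<close> \<open>K \<ge> 0\<close> by (simp add: field_simps)
  finally have small: "(2 * K + \<epsilon>) * \<epsilon> < e" .
  obtain \<delta> where "\<delta> > 0" and \<delta>: "\<And>p q. dist p x < \<delta> \<Longrightarrow> dist q x < \<delta> \<Longrightarrow>
      norm (f p - f q - J *v (p - q)) \<le> \<epsilon> * norm (p - q)"
    using assms \<open>\<epsilon> > 0\<close> unfolding has_strict_derivative_at_def by blast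
  have close: "\<bar>mirror_quotient f a b c - det J\<bar> < e"
    if nondeg: "det2 (b - a) (c - b) \<noteq> 0" and "dist (a, b, c) (x, x, x) < \<delta> / 5" for a b c
  proof -
    have "dist a x < \<delta> / 5" "dist b x < \<delta> / 5" "dist c x < \<delta> / 5"
      using that(2) dist_fst_le[of "(a, b, c)" "(x, x, x)"] dist_fst_le[of "(b, c)" "(x, x)"]
        dist_snd_le[of "(b, c)" "(x, x)"] dist_snd_le[of "(a, b, c)" "(x, x, x)"] by auto
    moreover have "c \<noteq> b" using nondeg by (auto simp: det2_def)
    ultimately have "dist (mirror_vertex a b c) x < \<delta>"
      using dist_mirror_vertex_le[of c b a x] by linarith
    then have "\<bar>mirror_quotient f a b c - det J\<bar> \<le> (2 * K + \<epsilon>) * \<epsilon>"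
      unfolding K_def using \<open>\<epsilon> > 0\<close> \<open>dist a x < \<delta> / 5\<close> \<open>dist b x < \<delta> / 5\<close> \<open>dist c x < \<delta> / 5\<close> \<open>\<delta> > 0\<close>
      by (intro abs_mirror_quotient_minus_det_le nondeg \<delta>) auto
    then show ?thesis using small by linarith
  qed
  show "\<exists>d>0. \<forall>t\<in>{(a, b, c). det2 (b - a) (c - b) \<noteq> 0}. 0 < dist t (x, x, x) \<and> dist t (x, x, x) < d
          \<longrightarrow> dist ((\<lambda>(a, b, c). mirror_quotient f a b c) t) (det J) < e"
    using \<open>\<delta> > 0\<close> close by (intro exI[of _ "\<delta> / 5"]) (auto simp: dist_real_def)
qed

lemma smooth_transf_has_strict_jacobian:
  fixes f :: "real^2 \<Rightarrow> real^2"
  assumes "open \<Omega>" "smooth_transf \<Omega> f" "x \<in> \<Omega>"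
  shows "has_strict_derivative_at f (\<lambda>h. jacobian f (at x) *v h) x"
proof -
  \<comment> \<open>The Hessian enters only through the continuity of the gradient at \<open>x\<close>.\<close>
  have "\<exists>D. (\<forall>y\<in>\<Omega>. ((\<lambda>y. f y $ i) has_derivative (\<lambda>h. D y \<bullet> h)) (at y)) \<and> isCont D x" for i
  proof -
    have "smooth_fun \<Omega> (\<lambda>y. f y $ i)"
      using assms(2) exhaust_2[of i] by (auto simp: smooth_transf_def)
    then obtain D H where "\<forall>y\<in>\<Omega>. ((\<lambda>y. f y $ i) has_derivative (\<lambda>h. D y \<bullet> h)) (at y)"
        and "\<forall>y\<in>\<Omega>. (D has_derivative (\<lambda>h. H y *v h)) (at y)"
      unfolding smooth_fun_def by blast
    then show ?thesis using assms(3) has_derivative_continuous by blast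
  qed
  then obtain D where D: "\<And>i y. y \<in> \<Omega> \<Longrightarrow> ((\<lambda>y. f y $ i) has_derivative (\<lambda>h. D i y \<bullet> h)) (at y)"
      and "\<And>i. isCont (D i) x"
    by metis
  define J where "J = (\<chi> i. D i x)"
  have "(f has_derivative (\<lambda>h. J *v h)) (at x)"
    by (rule has_derivative_matrix_rows) (simp add: J_def D assms(3))
  then have "jacobian f (at x) = J"
    unfolding jacobian_def by (simp flip: frechet_derivative_at)
  moreover have "has_strict_derivative_at f (\<lambda>h. J *v h) x"
    using has_strict_derivative_at_if_isCont_gradient[OF assms(1,3) D \<open>isCont (D _) x\<close>]
    by (intro has_strict_derivative_at_componentwise) (simp add: J_def matrix_mult_dot)
  ultimately show ?thesis by simp
qed

theorem theorem1:
  fixes \<Omega> :: "(real^2) set" and f :: "real^2 \<Rightarrow> real^2" and x :: "real^2"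
  assumes "open \<Omega>" and "smooth_transf \<Omega> f" and "x \<in> \<Omega>"
  shows "((\<lambda>(a, b, c). det2 (f (mirror_vertex a b c) - f a) (f c - f b) / (2 * det2 (b - a) (c - b)))
           \<longlongrightarrow> det (jacobian f (at x)))
         (at (x, x, x) within
            {(a, b, c). det2 (b - a) (c - b) \<noteq> 0 \<and> balanced a b c \<and>
                        a \<in> \<Omega> \<and> b \<in> \<Omega> \<and> c \<in> \<Omega> \<and> mirror_vertex a b c \<in> \<Omega>})"
proof -
  have "((\<lambda>(a, b, c). mirror_quotient f a b c) \<longlongrightarrow> det (jacobian f (at x)))
          (at (x, x, x) within {(a, b, c). det2 (b - a) (c - b) \<noteq> 0})"
    by (rule mirror_quotient_tendsto_det[OF smooth_transf_has_strict_jacobian[OF assms]])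
  then show ?thesis
    unfolding mirror_quotient_def by (rule tendsto_within_subset) auto
qed

end
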